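(* Let $S=\{(a_i,b_i)\}_{i=1}^n\subset\mathbb R_{>0}\times\mathbb R_{\ge0}$ with $0<a_1<\cdots<a_n$, and let $f\in\mathbb R_{\ge0}[X]$ interpolate $S$. Then $f$ is the unique polynomial in $\mathbb R_{\ge0}[X]$ interpolating $S$ if and only if $f$ is the minimal polynomial of some proper subset $T\subsetneq S$.
   Context: $\mathbb R_{\ge0}[X]$ is the set of real polynomials with all coefficients nonnegative; $f$ interpolates a finite set $T$ of points $(a,b)$ if $f(a)=b$ for each. A finite sign sequence is $s\in\{-,0,+\}^\omega$ with finitely many nonzero entries ($\omega=\{0,1,\dots\}$); $\mathscr S$ is their set, $\mathscr S_+=\mathscr S\cap\{0,+\}^\omega$; $\mathrm{Sign}(f)$ is the sequence of signs of coefficients of $f$. $\mathrm{SC}(t)$ is the number of pairs $i<j$ with $\{t_i,t_j\}=\{-,+\}$ and $t_k=0$ for $i<k<j$. For $s\in\mathscr S_+$, $\mathfrak d(s)=\max\{\mathrm{SC}(t):t\in\mathscr S,\ t_i\in\{-,0,s_i\}\ \forall i\}$, $\mathfrak d(f)=\mathfrak d(\mathrm{Sign}(f))$. For a finite $T\subset\mathbb R_{>0}\times\mathbb R_{\ge0}$ with $\#T=m$ and pairwise distinct first coordinates, $f\in\mathbb R_{\ge0}[X]$ interpolating $T$ is the minimal polynomial of $T$ if $\mathfrak d(f)\le m$. *)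

theory Defs
  imports "HOL-Computational_Algebra.Polynomial"
begin

text \<open>Signs are encoded as integers: - is -1, 0 is 0, + is 1.\<close>

definition sign_seq :: "(nat \<Rightarrow> int) \<Rightarrow> bool" where
  "sign_seq t \<longleftrightarrow> (\<forall>i. t i \<in> {-1, 0, 1}) \<and> finite {i. t i \<noteq> 0}"

definition pos_sign_seq :: "(nat \<Rightarrow> int) \<Rightarrow> bool" where
  "pos_sign_seq s \<longleftrightarrow> sign_seq s \<and> (\<forall>i. s i \<in> {0, 1})"

definition Sign :: "real poly \<Rightarrow> nat \<Rightarrow> int" where
  "Sign f i = (if coeff f i > 0 then 1 else if coeff f i < 0 then -1 else 0)"

definition SC :: "(nat \<Rightarrow> int) \<Rightarrow> nat" where
  "SC t = card {(i, j). i < j \<and> {t i, t j} = {-1, 1} \<and> (\<forall>k. i < k \<and> k < j \<longrightarrow> t k = 0)}"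

definition dd :: "(nat \<Rightarrow> int) \<Rightarrow> nat" where
  "dd s = Max {SC t | t. sign_seq t \<and> (\<forall>i. t i \<in> {-1, 0, s i})}"

definition dd_poly :: "real poly \<Rightarrow> nat" where
  "dd_poly f = dd (Sign f)"

definition nonneg_poly :: "real poly \<Rightarrow> bool" where
  "nonneg_poly f \<longleftrightarrow> (\<forall>i. coeff f i \<ge> 0)"

definition interpolates :: "real poly \<Rightarrow> (real \<times> real) set \<Rightarrow> bool" where
  "interpolates f T \<longleftrightarrow> (\<forall>(a, b) \<in> T. poly f a = b)"

definition admissible_data :: "(real \<times> real) set \<Rightarrow> bool" where
  "admissible_data T \<longleftrightarrow> finite T \<and> (\<forall>(a, b) \<in> T. a > 0 \<and> b \<ge> 0) \<and> inj_on fst T"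

definition minimal_poly_of :: "(real \<times> real) set \<Rightarrow> real poly \<Rightarrow> bool" where
  "minimal_poly_of T f \<longleftrightarrow> admissible_data T \<and> nonneg_poly f \<and> interpolates f T
      \<and> dd_poly f \<le> card T"

end

theory Submission
  imports Defs
begin

text \<open>If another nonnegative polynomial \<open>g\<close> interpolates \<open>S\<close>, then \<open>f - g\<close> has at least
  \<open>|S|\<close> positive roots, and its coefficient signs are dominated by those of \<open>f\<close>: where \<open>f\<close> has a
  zero coefficient, \<open>f - g\<close> has a nonpositive one. Descartes' rule of signs then gives
  \<open>|S| \<le> d(f)\<close>. Conversely, if \<open>d(f) \<ge> |S|\<close>, pick a sign pattern dominated by that of \<open>f\<close> with
  \<open>|S|\<close> sign changes and a nonzero polynomial \<open>h\<close> vanishing at the abscissae of \<open>S\<close>, supported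
  on \<open>|S| + 1\<close> positions where the pattern alternates. Descartes' rule forces the coefficients
  of \<open>h\<close> to alternate as well, so up to sign \<open>h\<close> has positive coefficients only where \<open>f\<close> has,
  and \<open>f - \<epsilon> h\<close> is a second nonnegative interpolant. Thus \<open>f\<close> is unique iff \<open>d(f) < |S|\<close>,
  i.e. iff \<open>f\<close> is the minimal polynomial of \<open>S\<close> with one point removed.\<close>

section \<open>Sign changes\<close>

definition sign_change_pairs :: "(nat \<Rightarrow> int) \<Rightarrow> (nat \<times> nat) set" where
  "sign_change_pairs t =
     {(i, j). i < j \<and> {t i, t j} = {-1, 1} \<and> (\<forall>k. i < k \<and> k < j \<longrightarrow> t k = 0)}"

lemma SC_eq_card_sign_change_pairs: "SC t = card (sign_change_pairs t)"
  by (simp add: SC_def sign_change_pairs_def)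

lemma opposite_signs_iff: "{a, b} = {-1, 1::int} \<longleftrightarrow> a = -1 \<and> b = 1 \<or> a = 1 \<and> b = -1"
  by (auto simp: doubleton_eq_iff)

lemma sign_change_pairs_fst_unique:
  assumes "(i, j) \<in> sign_change_pairs t" and "(i, j') \<in> sign_change_pairs t"
  shows "j = j'"
proof (rule ccontr)
  assume "j \<noteq> j'"
  then have "j < j' \<or> j' < j" by arith
  with assms show False
    by (auto simp: sign_change_pairs_def opposite_signs_iff)
qed

lemma sign_change_pairs_snd_unique:
  assumes "(i, j) \<in> sign_change_pairs t" and "(i', j) \<in> sign_change_pairs t"
  shows "i = i'"
proof (rule ccontr)
  assume "i \<noteq> i'"
  then have "i < i' \<or> i' < i" by arith
  with assms show False
    by (auto simp: sign_change_pairs_def opposite_signs_iff)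
qed

text \<open>Each sign change contains a \<open>+\<close>, and each \<open>+\<close> lies in at most two sign changes.\<close>
lemma SC_le_twice_card_pos:
  assumes "finite {i. t i = 1}"
  shows "SC t \<le> 2 * card {i. t i = 1}"
proof -
  define \<phi> where "\<phi> = (\<lambda>(i::nat, j::nat). (if t i = 1 then i else j, t i = 1))"
  have "inj_on \<phi> (sign_change_pairs t)"
  proof (rule inj_onI, clarify)
    fix i j i' j'
    assume ij: "(i, j) \<in> sign_change_pairs t" and ij': "(i', j') \<in> sign_change_pairs t"
      and "\<phi> (i, j) = \<phi> (i', j')"
    then have "t i = 1 \<and> i = i' \<or> t i \<noteq> 1 \<and> j = j'"
      by (auto simp: \<phi>_def split: if_splits)
    then show "i = i' \<and> j = j'"
      using ij ij' sign_change_pairs_fst_unique sign_change_pairs_snd_unique by blast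
  qed
  moreover have "\<phi> ` sign_change_pairs t \<subseteq> {i. t i = 1} \<times> UNIV"
    by (auto simp: \<phi>_def sign_change_pairs_def opposite_signs_iff)
  ultimately have "card (sign_change_pairs t) \<le> card ({i. t i = 1} \<times> (UNIV :: bool set))"
    using assms by (intro card_inj_on_le) auto
  then show ?thesis
    by (simp add: SC_eq_card_sign_change_pairs card_cartesian_product)
qed

lemma SC_le_card_support:
  assumes "finite {i. t i \<noteq> 0}"
  shows "SC t \<le> card {i. t i \<noteq> 0} - 1"
proof (cases "{i. t i \<noteq> 0} = {}")
  case True
  then have "sign_change_pairs t = {}"
    by (auto simp: sign_change_pairs_def opposite_signs_iff)
  then show ?thesis by (simp add: SC_eq_card_sign_change_pairs)
next
  case False
  define m where "m = Min {i. t i \<noteq> 0}"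
  have m: "m \<in> {i. t i \<noteq> 0}"
    using False assms unfolding m_def by (intro Min_in) auto
  have "inj_on snd (sign_change_pairs t)"
    by (rule inj_onI) (metis sign_change_pairs_snd_unique prod.collapse)
  moreover have "snd ` sign_change_pairs t \<subseteq> {i. t i \<noteq> 0} - {m}"
  proof clarify
    fix i j assume ij: "(i, j) \<in> sign_change_pairs t"
    then have "t i \<noteq> 0" "t j \<noteq> 0" "i < j"
      by (auto simp: sign_change_pairs_def opposite_signs_iff)
    moreover from \<open>t i \<noteq> 0\<close> have "m \<le> i"
      unfolding m_def using assms by simp
    ultimately show "snd (i, j) \<in> {i. t i \<noteq> 0} - {m}" by auto
  qed
  ultimately have "card (sign_change_pairs t) \<le> card ({i. t i \<noteq> 0} - {m})"
    using assms by (intro card_inj_on_le) auto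
  then show ?thesis
    using m assms by (simp add: SC_eq_card_sign_change_pairs)
qed

lemma sign_change_pairs_Suc_shift:
  assumes "t (Suc j) \<noteq> 0" and "\<forall>k<j. t (Suc k) = 0"
  shows "sign_change_pairs t =
           map_prod Suc Suc ` sign_change_pairs (\<lambda>i. t (Suc i))
           \<union> (if {t 0, t (Suc j)} = {-1, 1} then {(0, Suc j)} else {})"
proof (rule set_eqI, clarify)
  fix i k
  have first: "(0, k) \<in> sign_change_pairs t \<longleftrightarrow> k = Suc j \<and> {t 0, t (Suc j)} = {-1, 1}"
  proof
    assume "(0, k) \<in> sign_change_pairs t"
    then have k: "0 < k" "t k \<noteq> 0" "\<forall>l. 0 < l \<and> l < k \<longrightarrow> t l = 0" "{t 0, t k} = {-1, 1}"
      by (auto simp: sign_change_pairs_def opposite_signs_iff)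
    then obtain k' where "k = Suc k'" by (cases k) auto
    with k assms have "k = Suc j"
      by (metis linorder_neqE_nat Suc_less_eq zero_less_Suc)
    with k show "k = Suc j \<and> {t 0, t (Suc j)} = {-1, 1}" by simp
  next
    assume "k = Suc j \<and> {t 0, t (Suc j)} = {-1, 1}"
    with assms show "(0, k) \<in> sign_change_pairs t"
      by (auto simp: sign_change_pairs_def gr0_conv_Suc)
  qed
  have later: "(Suc i', k) \<in> sign_change_pairs t \<longleftrightarrow>
      (\<exists>k'. k = Suc k' \<and> (i', k') \<in> sign_change_pairs (\<lambda>i. t (Suc i)))" for i'
    by (cases k) (auto simp: sign_change_pairs_def less_Suc_eq_0_disj)
  show "(i, k) \<in> sign_change_pairs t \<longleftrightarrow> (i, k) \<in> map_prod Suc Suc ` sign_change_pairs (\<lambda>i. t (Suc i))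
           \<union> (if {t 0, t (Suc j)} = {-1, 1} then {(0, Suc j)} else {})"
    by (cases i) (auto simp: first later)
qed

lemma SC_eq_0_if_support_subset_singleton:
  assumes "{i. t i \<noteq> 0} \<subseteq> {k}"
  shows "SC t = 0"
proof -
  have "(i, j) \<notin> sign_change_pairs t" for i j
  proof
    assume "(i, j) \<in> sign_change_pairs t"
    then have "i < j" "t i \<noteq> 0" "t j \<noteq> 0"
      by (auto simp: sign_change_pairs_def opposite_signs_iff)
    with assms show False
      by auto
  qed
  then have "sign_change_pairs t = {}"
    by auto
  then show ?thesis
    by (simp add: SC_eq_card_sign_change_pairs)
qed

lemma sign_seq_Suc_shift: "sign_seq t \<Longrightarrow> sign_seq (\<lambda>i. t (Suc i))"
  using finite_vimageI[of "{i. t i \<noteq> 0}" Suc] by (simp add: sign_seq_def vimage_def)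

lemma SC_Suc_shift:
  assumes "finite {i. t i \<noteq> 0}" and "t (Suc j) \<noteq> 0" and "\<forall>k<j. t (Suc k) = 0"
  shows "SC t = SC (\<lambda>i. t (Suc i)) + (if {t 0, t (Suc j)} = {-1, 1} then 1 else 0)"
proof -
  have "finite (sign_change_pairs t)"
    by (rule finite_subset[of _ "{i. t i \<noteq> 0} \<times> {i. t i \<noteq> 0}"])
       (auto simp: sign_change_pairs_def opposite_signs_iff assms(1))
  then have "finite (map_prod Suc Suc ` sign_change_pairs (\<lambda>i. t (Suc i)))"
    by (rule finite_subset[rotated]) (auto simp: sign_change_pairs_Suc_shift[OF assms(2,3)])
  moreover have "card (map_prod Suc Suc ` sign_change_pairs (\<lambda>i. t (Suc i)))
      = SC (\<lambda>i. t (Suc i))"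
    unfolding SC_eq_card_sign_change_pairs by (rule card_image) (auto simp: inj_on_def)
  moreover have "(0, Suc j) \<notin> map_prod Suc Suc ` sign_change_pairs (\<lambda>i. t (Suc i))"
    by auto
  ultimately show ?thesis
    unfolding SC_eq_card_sign_change_pairs sign_change_pairs_Suc_shift[OF assms(2,3)]
    by simp
qed


section \<open>Descartes' rule of signs\<close>

lemma finite_coeff_nonzero: "finite {i. coeff p i \<noteq> 0}"
  by (rule finite_subset[of _ "{..degree p}"]) (auto intro: le_degree)

lemma Sign_eq_0_iff [simp]: "Sign p i = 0 \<longleftrightarrow> coeff p i = 0"
  by (auto simp: Sign_def)

lemma of_int_Sign: "of_int (Sign p i) = sgn (coeff p i)"
  by (simp add: Sign_def sgn_if)

lemma Sign_range: "Sign p i \<in> {-1, 0, 1}"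
  by (simp add: Sign_def)

lemma sign_seq_Sign: "sign_seq (Sign p)"
  using Sign_range finite_coeff_nonzero[of p] by (simp add: sign_seq_def)

lemma Sign_pCons_Suc [simp]: "Sign (pCons a p) (Suc i) = Sign p i"
  by (simp add: Sign_def)

lemma Sign_pderiv: "Sign (pderiv p) i = Sign p (Suc i)"
  by (simp add: Sign_def coeff_pderiv zero_less_mult_iff mult_less_0_iff)

lemma Sign_smult_unit:
  assumes "\<sigma> \<in> {-1, 1}"
  shows "Sign (smult (of_int \<sigma>) p) i = \<sigma> * Sign p i"
  using assms by (auto simp: Sign_def)

lemma eventually_sgn_poly_at_right_0:
  fixes p :: "real poly"
  assumes "coeff p j \<noteq> 0" and "\<forall>k<j. coeff p k = 0"
  shows "eventually (\<lambda>x. sgn (poly p x) = sgn (coeff p j)) (at_right 0)"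
  using assms
proof (induction j arbitrary: p)
  case 0
  have lim: "(poly p \<longlongrightarrow> coeff p 0) (at_right 0)"
    using tendsto_poly[OF tendsto_ident_at, of p 0 "{0<..}"] by (simp add: poly_0_coeff_0)
  show ?case
  proof (cases "coeff p 0 > 0")
    case True
    from order_tendstoD(1)[OF lim True] show ?thesis
      by (rule eventually_mono) (use True in simp)
  next
    case False
    with "0.prems" have "coeff p 0 < 0" by simp
    from order_tendstoD(2)[OF lim this] show ?thesis
      by (rule eventually_mono) (use \<open>coeff p 0 < 0\<close> in simp)
  qed
next
  case (Suc j)
  obtain a q where p: "p = pCons a q" by (cases p)
  with Suc.prems have "a = 0" "coeff q j \<noteq> 0" "\<forall>k<j. coeff q k = 0"
    by (auto simp: coeff_pCons split: nat.splits)
  with Suc.IH have "eventually (\<lambda>x. sgn (poly q x) = sgn (coeff q j)) (at_right 0)"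
    by blast
  with eventually_at_right_less show ?case
    by (rule eventually_elim2) (simp add: p \<open>a = 0\<close> sgn_mult)
qed

text \<open>Rolle's theorem between consecutive roots.\<close>
lemma card_roots_le_Suc_card_pderiv_roots:
  fixes p :: "real poly"
  assumes "pderiv p \<noteq> 0" and "finite R" and "\<forall>x\<in>R. poly p x = 0"
  shows "card R \<le> Suc (card {x. Min R < x \<and> x < Max R \<and> poly (pderiv p) x = 0})"
  using assms(2,3)
proof (induction R rule: finite_linorder_max_induct)
  case empty
  show ?case by simp
next
  case (insert b A)
  let ?D = "\<lambda>R. {x. Min R < x \<and> x < Max R \<and> poly (pderiv p) x = 0}"
  show ?case
  proof (cases "A = {}")
    case True
    then show ?thesis by simp
  next
    case False
    have Max_A: "Max A \<in> A" "Max A < b"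
      using insert.hyps False by auto
    have "Min A \<le> Max A"
      using insert.hyps(1) False by simp
    then have "Min (insert b A) = Min A" "Max (insert b A) = b"
      using insert.hyps(1) False Max_A by (simp_all add: Min_insert Max_insert)
    then have D: "?D (insert b A) = {x. Min A < x \<and> x < b \<and> poly (pderiv p) x = 0}"
      by simp
    obtain \<xi> where \<xi>: "Max A < \<xi>" "\<xi> < b" "poly (pderiv p) \<xi> = 0"
      using poly_MVT[OF \<open>Max A < b\<close>, of p] insert.prems Max_A by auto
    have "insert \<xi> (?D A) \<subseteq> ?D (insert b A)"
      unfolding D using \<xi> \<open>Min A \<le> Max A\<close> by auto
    moreover have "finite (?D (insert b A))"
      using poly_roots_finite[OF assms(1)] by (rule rev_finite_subset) auto
    ultimately have "card (insert \<xi> (?D A)) \<le> card (?D (insert b A))"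
      by (rule card_mono[rotated])
    moreover have "\<xi> \<notin> ?D A" and "finite (?D A)"
      using \<xi>(1) poly_roots_finite[OF assms(1)] by (auto elim: rev_finite_subset)
    moreover have "card A \<le> Suc (card (?D A))"
      using insert by simp
    moreover have "b \<notin> A"
      using insert.hyps(2) by blast
    ultimately show ?thesis
      using insert.hyps(1) by simp
  qed
qed

text \<open>Near \<open>0\<close> the derivative has the sign of \<open>p(0)\<close>, while the mean value theorem on \<open>[0, m]\<close>
  gives a point where it has the opposite sign.\<close>
lemma pderiv_root_before_root:
  fixes p :: "real poly"
  assumes "0 < m" and "poly p m = 0"
    and "coeff (pderiv p) j \<noteq> 0" and "\<forall>k<j. coeff (pderiv p) k = 0"
    and sgn_eq: "sgn (coeff (pderiv p) j) = sgn (coeff p 0)"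
  shows "\<exists>y. 0 < y \<and> y < m \<and> poly (pderiv p) y = 0"
proof -
  obtain \<xi> where \<xi>: "0 < \<xi>" "\<xi> < m" "poly p m - poly p 0 = (m - 0) * poly (pderiv p) \<xi>"
    using poly_MVT[OF \<open>0 < m\<close>] by blast
  then have "poly (pderiv p) \<xi> = - coeff p 0 / m"
    using assms(1,2) by (simp add: poly_0_coeff_0 field_simps)
  then have sgn_\<xi>: "sgn (poly (pderiv p) \<xi>) = - sgn (coeff p 0)"
    using \<open>0 < m\<close> by simp
  obtain b where "b > 0" and b: "\<forall>x>0. x < b \<longrightarrow> sgn (poly (pderiv p) x) = sgn (coeff p 0)"
    using eventually_sgn_poly_at_right_0[OF assms(3,4)] sgn_eq
    unfolding eventually_at_right_field by auto
  define x where "x = min (b / 2) (\<xi> / 2)"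
  have x: "0 < x" "x < \<xi>" "sgn (poly (pderiv p) x) = sgn (coeff p 0)"
    using b \<open>b > 0\<close> \<xi>(1) by (auto simp: x_def)
  have "coeff p 0 \<noteq> 0"
    using assms(3) sgn_eq by (metis sgn_eq_0_iff)
  have "sgn (poly (pderiv p) x * poly (pderiv p) \<xi>) = - (sgn (coeff p 0) * sgn (coeff p 0))"
    by (simp add: sgn_mult x(3) sgn_\<xi>)
  also have "\<dots> = -1"
    using \<open>coeff p 0 \<noteq> 0\<close> by (simp add: sgn_if)
  finally have "poly (pderiv p) x * poly (pderiv p) \<xi> < 0"
    by (simp add: sgn_1_neg)
  from poly_IVT[OF \<open>x < \<xi>\<close> this] x(1) \<xi>(2) show ?thesis
    by (meson less_trans)
qed

lemma card_pos_roots_le_Suc_card_pderiv_roots_above: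
  fixes p :: "real poly"
  assumes "p \<noteq> 0" and "pderiv p \<noteq> 0" and "\<forall>x. 0 < x \<and> poly p x = 0 \<longrightarrow> m \<le> x"
  shows "card {x. 0 < x \<and> poly p x = 0} \<le> Suc (card {x. m < x \<and> poly (pderiv p) x = 0})"
proof (cases "{x. 0 < x \<and> poly p x = 0} = {}")
  case False
  let ?R = "{x. 0 < x \<and> poly p x = 0}"
  let ?D = "{x. Min ?R < x \<and> x < Max ?R \<and> poly (pderiv p) x = 0}"
  have fin_R: "finite ?R"
    using poly_roots_finite[OF assms(1)] by (rule rev_finite_subset) auto
  have "card ?R \<le> Suc (card ?D)"
    by (rule card_roots_le_Suc_card_pderiv_roots[OF assms(2) fin_R]) simp
  moreover have "m \<le> Min ?R"
    using Min_in[OF fin_R False] assms(3) by blast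
  then have "?D \<subseteq> {x. m < x \<and> poly (pderiv p) x = 0}"
    by auto
  moreover have "finite {x. m < x \<and> poly (pderiv p) x = 0}"
    using poly_roots_finite[OF assms(2)] by (rule rev_finite_subset) auto
  ultimately show ?thesis
    by (meson card_mono le_trans Suc_le_mono)
qed (metis card.empty le0)

lemma card_pos_roots_le_card_pos_roots_pderiv_if_root_before:
  fixes p :: "real poly"
  assumes "p \<noteq> 0" and "pderiv p \<noteq> 0"
    and before: "\<And>m. 0 < m \<Longrightarrow> poly p m = 0 \<Longrightarrow> \<exists>y. 0 < y \<and> y < m \<and> poly (pderiv p) y = 0"
  shows "card {x. 0 < x \<and> poly p x = 0} \<le> card {x. 0 < x \<and> poly (pderiv p) x = 0}"
proof (cases "{x. 0 < x \<and> poly p x = 0} = {}")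
  case False
  let ?R = "{x. 0 < x \<and> poly p x = 0}"
  let ?R' = "{x. 0 < x \<and> poly (pderiv p) x = 0}"
  let ?A = "{x. Min ?R < x \<and> poly (pderiv p) x = 0}"
  have fin_R: "finite ?R"
    using poly_roots_finite[OF assms(1)] by (rule rev_finite_subset) auto
  then have m: "0 < Min ?R" "poly p (Min ?R) = 0"
    using Min_in[OF fin_R False] by simp_all
  then obtain y where y: "0 < y" "y < Min ?R" "poly (pderiv p) y = 0"
    using before by blast
  have "insert y ?A \<subseteq> ?R'"
    using m(1) y by auto
  moreover have "finite ?R'"
    using poly_roots_finite[OF assms(2)] by (rule rev_finite_subset) auto
  ultimately have "card (insert y ?A) \<le> card ?R'"
    by (rule card_mono[rotated])
  moreover have "y \<notin> ?A" and "finite ?A"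
    using y(2) poly_roots_finite[OF assms(2)] by (auto elim: rev_finite_subset)
  moreover have "card ?R \<le> Suc (card ?A)"
    using fin_R by (intro card_pos_roots_le_Suc_card_pderiv_roots_above assms(1,2)) simp
  ultimately show ?thesis
    by simp
qed (metis card.empty le0)

text \<open>Rolle's theorem loses one root, which is recovered when the first two nonzero coefficients
  of \<open>p\<close> have the same sign: then \<open>p'\<close> also vanishes before the first positive root of \<open>p\<close>.\<close>
lemma card_pos_roots_le_card_pos_roots_pderiv:
  fixes p :: "real poly"
  assumes "coeff p 0 \<noteq> 0" and "coeff p (Suc j) \<noteq> 0" and "\<forall>k<j. coeff p (Suc k) = 0"
  shows "card {x. 0 < x \<and> poly p x = 0} \<le> card {x. 0 < x \<and> poly (pderiv p) x = 0}
           + (if {Sign p 0, Sign p (Suc j)} = {-1, 1} then 1 else 0)"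
proof -
  have p': "coeff (pderiv p) j \<noteq> 0" "\<forall>k<j. coeff (pderiv p) k = 0"
    using assms(2,3) by (simp_all add: coeff_pderiv)
  then have "p \<noteq> 0" "pderiv p \<noteq> 0"
    using assms(1) by auto
  have "Sign p 0 \<noteq> 0" "Sign p (Suc j) \<noteq> 0"
    using assms(1,2) by simp_all
  then consider "{Sign p 0, Sign p (Suc j)} = {-1, 1}" | "Sign p (Suc j) = Sign p 0"
    using Sign_range[of p 0] Sign_range[of p "Suc j"] by (auto simp: opposite_signs_iff)
  then show ?thesis
  proof cases
    case 1
    with card_pos_roots_le_Suc_card_pderiv_roots_above[OF \<open>p \<noteq> 0\<close> \<open>pderiv p \<noteq> 0\<close>, of 0]
    show ?thesis
      by simp
  next
    case 2
    have "sgn (coeff (pderiv p) j) = of_int (Sign p (Suc j))"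
      by (simp add: Sign_pderiv flip: of_int_Sign)
    with 2 have "sgn (coeff (pderiv p) j) = sgn (coeff p 0)"
      by (simp add: of_int_Sign)
    with pderiv_root_before_root p'
    have "card {x. 0 < x \<and> poly p x = 0} \<le> card {x. 0 < x \<and> poly (pderiv p) x = 0}"
      by (intro card_pos_roots_le_card_pos_roots_pderiv_if_root_before \<open>p \<noteq> 0\<close> \<open>pderiv p \<noteq> 0\<close>)
        blast
    with 2 show ?thesis
      by (simp add: opposite_signs_iff)
  qed
qed

theorem descartes_rule_of_signs:
  fixes p :: "real poly"
  assumes "p \<noteq> 0"
  shows "card {x. 0 < x \<and> poly p x = 0} \<le> SC (Sign p)"
  using assms
proof (induction "degree p" arbitrary: p rule: less_induct)
  case less
  obtain a q where p: "p = pCons a q" by (cases p)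
  show ?case
  proof (cases "q = 0")
    case True
    then have "{x. 0 < x \<and> poly p x = 0} = {}"
      using less.prems p by auto
    then show ?thesis by (metis card.empty le0)
  next
    case False
    then obtain j where j: "coeff q j \<noteq> 0" "\<forall>k<j. coeff q k = 0"
      using exists_least_iff[of "\<lambda>i. coeff q i \<noteq> 0"] by (metis leading_coeff_0_iff)
    have tail: "(\<lambda>i. Sign p (Suc i)) = Sign q"
      by (simp add: p)
    have SC_p: "SC (Sign p) = SC (Sign q) + (if {Sign p 0, Sign p (Suc j)} = {-1, 1} then 1 else 0)"
      using SC_Suc_shift[of "Sign p" j] j finite_coeff_nonzero[of p] by (simp add: p tail)
    have deg: "degree p = Suc (degree q)"
      using False by (simp add: p)
    show ?thesis
    proof (cases "a = 0")
      case True
      then have "{x. 0 < x \<and> poly p x = 0} = {x. 0 < x \<and> poly q x = 0}"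
        by (auto simp: p)
      moreover have "Sign p 0 = 0"
        using True by (simp add: p)
      then have "SC (Sign p) = SC (Sign q)"
        using SC_p unfolding \<open>Sign p 0 = 0\<close> by (simp add: opposite_signs_iff)
      ultimately show ?thesis
        using less.hyps[of q] deg False by simp
    next
      case False
      have "pderiv p \<noteq> 0" "degree (pderiv p) < degree p"
        using deg degree_pderiv[of p] by (auto simp: pderiv_eq_0_iff)
      moreover have "Sign (pderiv p) = Sign q"
        by (rule ext) (simp add: Sign_pderiv p)
      ultimately have "card {x. 0 < x \<and> poly (pderiv p) x = 0} \<le> SC (Sign q)"
        using less.hyps by metis
      moreover have "coeff p 0 \<noteq> 0" "coeff p (Suc j) \<noteq> 0" "\<forall>k<j. coeff p (Suc k) = 0"
        using False j by (simp_all add: p)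
      note card_pos_roots_le_card_pos_roots_pderiv[OF this]
      ultimately show ?thesis
        using SC_p by linarith
    qed
  qed
qed

lemma card_le_card_pos_roots:
  fixes h :: "real poly"
  assumes "h \<noteq> 0" and "A \<subseteq> {0<..}" and "\<forall>a\<in>A. poly h a = 0"
  shows "card A \<le> card {x. 0 < x \<and> poly h x = 0}"
proof (rule card_mono)
  show "finite {x. 0 < x \<and> poly h x = 0}"
    using poly_roots_finite[OF assms(1)] by (rule rev_finite_subset) auto
qed (use assms in auto)


section \<open>Alternating chains\<close>

definition alternating_chain :: "(nat \<Rightarrow> int) \<Rightarrow> (nat \<Rightarrow> nat) \<Rightarrow> nat \<Rightarrow> bool" where
  "alternating_chain t e n \<longleftrightarrow>
     strict_mono e \<and> (\<forall>k\<le>n. t (e k) \<noteq> 0) \<and> (\<forall>k<n. t (e (Suc k)) = - t (e k))"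

lemma support_eq_image_if_SC_ge:
  assumes e: "strict_mono e" and supp: "{i. t i \<noteq> 0} \<subseteq> e ` {..n}"
    and "{i. t i \<noteq> 0} \<noteq> {}" and "n \<le> SC t"
  shows "{i. t i \<noteq> 0} = e ` {..n}"
proof -
  have fin: "finite {i. t i \<noteq> 0}"
    using supp finite_subset by blast
  have "card (e ` {..n}) = Suc n"
    using strict_mono_imp_inj_on[OF e] by (simp add: card_image)
  moreover have "card {i. t i \<noteq> 0} > 0"
    using fin \<open>{i. t i \<noteq> 0} \<noteq> {}\<close> by (simp add: card_gt_0_iff)
  then have "Suc n \<le> card {i. t i \<noteq> 0}"
    using SC_le_card_support[OF fin] \<open>n \<le> SC t\<close> by linarith
  ultimately show ?thesis
    using supp by (intro card_seteq) auto
qed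

lemma alternating_chain_if_SC_ge:
  assumes e: "strict_mono e" and supp: "{i. t i \<noteq> 0} \<subseteq> e ` {..n}"
    and "{i. t i \<noteq> 0} \<noteq> {}" and "n \<le> SC t"
  shows "alternating_chain t e n"
proof -
  have supp_eq: "{i. t i \<noteq> 0} = e ` {..n}"
    using support_eq_image_if_SC_ge[OF assms] .
  let ?K = "{k. k < n \<and> t (e (Suc k)) = - t (e k)}"
  have "sign_change_pairs t \<subseteq> (\<lambda>k. (e k, e (Suc k))) ` ?K"
  proof clarify
    fix i j assume "(i, j) \<in> sign_change_pairs t"
    then have ij: "i < j" "t i = -1 \<and> t j = 1 \<or> t i = 1 \<and> t j = -1"
      and between: "\<forall>l. i < l \<and> l < j \<longrightarrow> t l = 0"
      by (auto simp: sign_change_pairs_def opposite_signs_iff)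
    then have "i \<in> {i. t i \<noteq> 0}" "j \<in> {i. t i \<noteq> 0}" by auto
    then obtain k k' where k: "k \<le> n" "k' \<le> n" "i = e k" "j = e k'"
      unfolding supp_eq by blast
    with ij e have "k < k'"
      by (simp add: strict_mono_less)
    have "k' = Suc k"
    proof (rule ccontr)
      assume "k' \<noteq> Suc k"
      with \<open>k < k'\<close> have "i < e (Suc k)" "e (Suc k) < j" "Suc k \<le> n"
        using e k by (auto simp: strict_mono_less)
      moreover have "e (Suc k) \<in> {i. t i \<noteq> 0}"
        unfolding supp_eq using \<open>Suc k \<le> n\<close> by simp
      ultimately show False
        using between by auto
    qed
    with ij k show "(i, j) \<in> (\<lambda>k. (e k, e (Suc k))) ` ?K"
      by auto
  qed
  then have "SC t \<le> card ((\<lambda>k. (e k, e (Suc k))) ` ?K)"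
    unfolding SC_eq_card_sign_change_pairs by (rule card_mono[rotated]) auto
  also have "\<dots> \<le> card ?K"
    by (rule card_image_le) auto
  finally have "?K = {..<n}"
    using \<open>n \<le> SC t\<close> by (intro card_seteq) auto
  then show ?thesis
    using e supp_eq unfolding alternating_chain_def by auto
qed

lemma alternating_chain_shift:
  "alternating_chain (\<lambda>i. t (Suc i)) e n \<Longrightarrow> alternating_chain t (Suc \<circ> e) n"
  by (simp add: alternating_chain_def strict_mono_def)

lemma alternating_chain_Cons:
  assumes "alternating_chain t e n" and "i < e 0" and "t i = - t (e 0)"
  shows "alternating_chain t (case_nat i e) (Suc n)"
  using assms unfolding alternating_chain_def strict_mono_Suc_iff
  by (auto split: nat.splits simp: less_Suc_eq_0_disj)

lemma alternating_chain_replace_first: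
  assumes "alternating_chain t e n" and "i < e 1" and "t i = t (e 0)"
  shows "alternating_chain t (e(0 := i)) n"
  using assms unfolding alternating_chain_def strict_mono_Suc_iff
  by (auto simp: less_Suc_eq_0_disj)

lemma alternating_chain_mono:
  "alternating_chain t e m \<Longrightarrow> n \<le> m \<Longrightarrow> alternating_chain t e n"
  by (auto simp: alternating_chain_def)

lemma alternating_chain_prepend:
  assumes chain: "alternating_chain (\<lambda>i. t (Suc i)) e n" and first: "\<forall>i<e 0. t (Suc i) = 0"
    and vals: "\<forall>i. t i \<in> {-1, 0, 1}"
  shows "\<exists>e'. alternating_chain t e' (n + (if {t 0, t (Suc (e 0))} = {-1, 1} then 1 else 0))
              \<and> (\<forall>i<e' 0. t i = 0)"
proof -
  have shifted: "alternating_chain t (Suc \<circ> e) n"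
    using chain by (rule alternating_chain_shift)
  have "t (Suc (e 0)) \<noteq> 0"
    using chain by (simp add: alternating_chain_def)
  then consider "t 0 = 0" | "t 0 \<noteq> 0" "t 0 = - t (Suc (e 0))" | "t 0 = t (Suc (e 0))"
    using vals[rule_format, of 0] vals[rule_format, of "Suc (e 0)"] by auto
  then show ?thesis
  proof cases
    case 1
    then have "\<forall>i<Suc (e 0). t i = 0"
      using first by (auto simp: less_Suc_eq_0_disj)
    with 1 shifted show ?thesis
      by (intro exI[of _ "Suc \<circ> e"]) (simp add: opposite_signs_iff)
  next
    case 2
    then have "alternating_chain t (case_nat 0 (Suc \<circ> e)) (Suc n)"
      using shifted by (intro alternating_chain_Cons) simp_all
    moreover have "t (Suc (e 0)) \<in> {-1, 1}"
      using vals[rule_format, of "Suc (e 0)"] \<open>t (Suc (e 0)) \<noteq> 0\<close> by auto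
    ultimately show ?thesis
      using 2
      by (intro exI[of _ "case_nat 0 (Suc \<circ> e)"]) (auto simp: opposite_signs_iff)
  next
    case 3
    then have no_change: "(if {t 0, t (Suc (e 0))} = {-1, 1} then 1 else 0) = (0::nat)"
      by (simp add: opposite_signs_iff)
    show ?thesis
      unfolding no_change add_0_right
    proof (intro exI conjI)
      show "alternating_chain t ((Suc \<circ> e)(0 := 0)) n"
        using 3 shifted by (intro alternating_chain_replace_first) simp_all
      show "\<forall>i<((Suc \<circ> e)(0 := 0)) 0. t i = 0"
        by simp
    qed
  qed
qed

lemma alternating_chain_of_SC:
  assumes "sign_seq t" and "\<exists>i. t i \<noteq> 0"
  shows "\<exists>e. alternating_chain t e (SC t) \<and> (\<forall>i<e 0. t i = 0)"
proof -
  have "finite {i. t i \<noteq> 0}"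
    using assms(1) by (simp add: sign_seq_def)
  then obtain N where "\<forall>i\<in>{i. t i \<noteq> 0}. i < N"
    using finite_nat_set_iff_bounded by blast
  then have "\<forall>i\<ge>N. t i = 0"
    using leD by blast
  then show ?thesis
    using assms
  proof (induction N arbitrary: t)
    case 0
    then show ?case by auto
  next
    case (Suc N t)
    define t' where "t' = (\<lambda>i. t (Suc i))"
    have fin: "finite {i. t i \<noteq> 0}" and vals: "\<forall>i. t i \<in> {-1, 0, 1}"
      using Suc.prems(2) by (simp_all add: sign_seq_def)
    have "\<forall>i\<ge>N. t' i = 0" and "sign_seq t'"
      using Suc.prems(1,2) sign_seq_Suc_shift by (simp_all add: t'_def)
    show ?case
    proof (cases "\<exists>i. t' i \<noteq> 0")
      case True
      with Suc.IH \<open>\<forall>i\<ge>N. t' i = 0\<close> \<open>sign_seq t'\<close> obtain e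
        where e: "alternating_chain t' e (SC t')" "\<forall>i<e 0. t' i = 0"
        by blast
      then have "SC t = SC t' + (if {t 0, t (Suc (e 0))} = {-1, 1} then 1 else 0)"
        using SC_Suc_shift[OF fin, of "e 0"] by (simp add: t'_def alternating_chain_def)
      with alternating_chain_prepend[OF e[unfolded t'_def] vals] show ?thesis
        by (simp add: t'_def)
    next
      case False
      then have tail: "t (Suc i) = 0" for i
        by (simp add: t'_def)
      then have "{i. t i \<noteq> 0} \<subseteq> {0}"
        using not0_implies_Suc by blast
      then have "SC t = 0"
        by (rule SC_eq_0_if_support_subset_singleton)
      moreover have "t 0 \<noteq> 0"
        using Suc.prems(3) tail by (metis not0_implies_Suc)
      ultimately have "alternating_chain t id (SC t)"
        by (simp add: alternating_chain_def strict_mono_def)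
      then show ?thesis
        by auto
    qed
  qed
qed

lemma alternating_chain_agree:
  assumes "alternating_chain u e n" and "alternating_chain t e n" and "u (e 0) = t (e 0)"
    and "k \<le> n"
  shows "u (e k) = t (e k)"
  using assms(4)
proof (induction k)
  case 0
  then show ?case using assms(3) by simp
next
  case (Suc k)
  then show ?case
    using assms(1,2) by (simp add: alternating_chain_def)
qed

lemma alternating_chain_Sign_if_many_roots:
  fixes h :: "real poly"
  assumes "h \<noteq> 0" and "strict_mono e" and "\<forall>i. coeff h i \<noteq> 0 \<longrightarrow> i \<in> e ` {..n}"
    and "n \<le> card {x. 0 < x \<and> poly h x = 0}"
  shows "alternating_chain (Sign h) e n"
proof (rule alternating_chain_if_SC_ge[OF assms(2)])
  show "{i. Sign h i \<noteq> 0} \<subseteq> e ` {..n}"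
    using assms(3) by auto
  show "{i. Sign h i \<noteq> 0} \<noteq> {}"
    using \<open>h \<noteq> 0\<close> by (auto simp: poly_eq_iff)
  show "n \<le> SC (Sign h)"
    using assms(4) descartes_rule_of_signs[OF \<open>h \<noteq> 0\<close>] by linarith
qed

text \<open>Combine solutions on the exponents \<open>e 0, \<dots>, e (n - 1)\<close> and \<open>e 1, \<dots>, e n\<close>: by Descartes'
  rule the first has \<open>e 0\<close> in its support, so the combination killing the remaining point is
  nonzero.\<close>
lemma exists_sparse_poly_vanishing:
  fixes A :: "real set" and e :: "nat \<Rightarrow> nat"
  assumes "finite A" and "A \<subseteq> {0<..}" and "strict_mono e" and "card A = n"
  shows "\<exists>h. h \<noteq> 0 \<and> (\<forall>i. coeff h i \<noteq> 0 \<longrightarrow> i \<in> e ` {..n}) \<and> (\<forall>a\<in>A. poly h a = 0)"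
  using assms
proof (induction n arbitrary: A e)
  case 0
  then show ?case
    by (intro exI[of _ "monom 1 (e 0)"]) (auto simp: coeff_monom split: if_splits)
next
  case (Suc n)
  then obtain a where a: "a \<in> A"
    by fastforce
  have A': "finite (A - {a})" "A - {a} \<subseteq> {0<..}" "card (A - {a}) = n"
    using Suc.prems a by auto
  have e': "strict_mono (e \<circ> Suc)"
    using Suc.prems(3) by (simp add: strict_mono_def)
  obtain h1 where h1: "h1 \<noteq> 0" "\<forall>i. coeff h1 i \<noteq> 0 \<longrightarrow> i \<in> e ` {..n}"
      "\<forall>x\<in>A - {a}. poly h1 x = 0"
    using Suc.IH[OF A'(1,2) Suc.prems(3) A'(3)] by blast
  obtain h2 where h2: "h2 \<noteq> 0" "\<forall>i. coeff h2 i \<noteq> 0 \<longrightarrow> i \<in> (e \<circ> Suc) ` {..n}"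
      "\<forall>x\<in>A - {a}. poly h2 x = 0"
    using Suc.IH[OF A'(1,2) e' A'(3)] by blast
  have "n \<le> card {x. 0 < x \<and> poly h1 x = 0}"
    using card_le_card_pos_roots[OF h1(1) A'(2) h1(3)] A'(3) by simp
  then have c1: "coeff h1 (e 0) \<noteq> 0"
    using alternating_chain_Sign_if_many_roots[OF h1(1) Suc.prems(3) h1(2)]
    by (simp add: alternating_chain_def)
  have c2: "coeff h2 (e 0) = 0"
    using h2(2) Suc.prems(3) by (auto simp: strict_mono_eq)
  define h where "h = smult (poly h2 a) h1 - smult (poly h1 a) h2"
  have supp: "\<forall>i. coeff h i \<noteq> 0 \<longrightarrow> i \<in> e ` {..Suc n}"
    using h1(2) h2(2) by (force simp: h_def)
  have vanish: "poly h x = 0" if "x \<in> A" for x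
    using that h1(3) h2(3) by (cases "x = a") (auto simp: h_def)
  show ?case
  proof (cases "poly h2 a = 0")
    case True
    then show ?thesis
      using h2 a by (intro exI[of _ h2]) force
  next
    case False
    then have "coeff h (e 0) \<noteq> 0"
      using c1 c2 by (simp add: h_def)
    then have "h \<noteq> 0"
      by auto
    with supp vanish show ?thesis
      by blast
  qed
qed

text \<open>Descartes' rule forces the signs of the polynomial from \<open>exists_sparse_poly_vanishing\<close> to
  alternate along the chain; a global sign makes them agree with \<open>t\<close>.\<close>
lemma exists_vanishing_poly_with_signs:
  fixes A :: "real set"
  assumes "finite A" and "A \<subseteq> {0<..}" and "card A = n"
    and chain: "alternating_chain t e n" and vals: "\<forall>i. t i \<in> {-1, 0, 1}"
  shows "\<exists>h. h \<noteq> 0 \<and> (\<forall>a\<in>A. poly h a = 0) \<and> (\<forall>i. coeff h i \<noteq> 0 \<longrightarrow> Sign h i = t i)"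
proof -
  have "strict_mono e"
    using chain by (simp add: alternating_chain_def)
  then obtain h0 where h0: "h0 \<noteq> 0" "\<forall>i. coeff h0 i \<noteq> 0 \<longrightarrow> i \<in> e ` {..n}"
      "\<forall>a\<in>A. poly h0 a = 0"
    using exists_sparse_poly_vanishing[OF assms(1,2) _ assms(3)] by blast
  then have chain_h0: "alternating_chain (Sign h0) e n"
    using alternating_chain_Sign_if_many_roots[OF h0(1) \<open>strict_mono e\<close> h0(2)]
      card_le_card_pos_roots[OF h0(1) assms(2)] assms(3) by simp
  define \<sigma> where "\<sigma> = t (e 0) * Sign h0 (e 0)"
  define h where "h = smult (of_int \<sigma>) h0"
  have "t (e 0) \<in> {-1, 1}" "Sign h0 (e 0) \<in> {-1, 1}"
    using chain chain_h0 vals Sign_range[of h0 "e 0"] by (auto simp: alternating_chain_def)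
  then have \<sigma>: "\<sigma> \<in> {-1, 1}" and "\<sigma> * Sign h0 (e 0) = t (e 0)"
    by (auto simp: \<sigma>_def)
  moreover have "Sign h = (\<lambda>i. \<sigma> * Sign h0 i)"
    using \<sigma> by (simp add: h_def Sign_smult_unit fun_eq_iff)
  ultimately have "alternating_chain (Sign h) e n" and "Sign h (e 0) = t (e 0)"
    using chain_h0 by (auto simp: alternating_chain_def)
  then have "Sign h (e k) = t (e k)" if "k \<le> n" for k
    using alternating_chain_agree chain that by blast
  moreover have "h \<noteq> 0" "\<forall>a\<in>A. poly h a = 0" "\<forall>i. coeff h i \<noteq> 0 \<longrightarrow> i \<in> e ` {..n}"
    using h0 \<sigma> by (auto simp: h_def)
  ultimately show ?thesis
    by blast
qed


section \<open>Uniqueness of nonnegative interpolants\<close>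

lemma finite_SC_dominated:
  assumes "finite {i. s i \<noteq> 0}"
  shows "finite {SC t | t. sign_seq t \<and> (\<forall>i. t i \<in> {-1, 0, s i})}"
proof -
  have "SC t \<le> 2 * card {i. s i \<noteq> 0}" if t: "\<forall>i. t i \<in> {-1, 0, s i}" for t
  proof -
    have "s i \<noteq> 0" if "t i = 1" for i
      using t[rule_format, of i] that by auto
    then have pos: "{i. t i = 1} \<subseteq> {i. s i \<noteq> 0}"
      by blast
    then have "SC t \<le> 2 * card {i. t i = 1}"
      using assms by (intro SC_le_twice_card_pos) (rule finite_subset)
    also have "\<dots> \<le> 2 * card {i. s i \<noteq> 0}"
      using card_mono[OF assms pos] by simp
    finally show ?thesis .
  qed
  then have "{SC t | t. sign_seq t \<and> (\<forall>i. t i \<in> {-1, 0, s i})} \<subseteq> {..2 * card {i. s i \<noteq> 0}}"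
    by auto
  then show ?thesis
    by (rule finite_subset) simp
qed

lemma SC_le_dd:
  assumes "finite {i. s i \<noteq> 0}" and "sign_seq t" and "\<forall>i. t i \<in> {-1, 0, s i}"
  shows "SC t \<le> dd s"
  unfolding dd_def using assms by (intro Max_ge[OF finite_SC_dominated]) blast+

lemma dd_attained:
  assumes "finite {i. s i \<noteq> 0}"
  obtains t where "sign_seq t" and "\<forall>i. t i \<in> {-1, 0, s i}" and "SC t = dd s"
proof -
  have "SC (\<lambda>_. 0) \<in> {SC t | t. sign_seq t \<and> (\<forall>i. t i \<in> {-1, 0, s i})}"
    by (auto simp: sign_seq_def)
  then have "dd s \<in> {SC t | t. sign_seq t \<and> (\<forall>i. t i \<in> {-1, 0, s i})}"
    unfolding dd_def using finite_SC_dominated[OF assms] by (intro Max_in) auto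
  with that show ?thesis
    by auto
qed

lemma exists_vanishing_poly_dominated:
  fixes f :: "real poly" and A :: "real set"
  assumes "finite A" and "A \<subseteq> {0<..}" and "card A \<le> dd_poly f"
  shows "\<exists>h. h \<noteq> 0 \<and> (\<forall>a\<in>A. poly h a = 0) \<and> (\<forall>i. 0 < coeff h i \<longrightarrow> 0 < coeff f i)"
proof (cases "A = {}")
  case True
  then show ?thesis
    by (intro exI[of _ "-1"]) simp
next
  case False
  obtain t where t: "sign_seq t" "\<forall>i. t i \<in> {-1, 0, Sign f i}" "SC t = dd_poly f"
    using dd_attained[of "Sign f"] finite_coeff_nonzero[of f] by (auto simp: dd_poly_def)
  have "0 < card A"
    using False assms(1) by (simp add: card_gt_0_iff)
  have "\<exists>i. t i \<noteq> 0"
  proof (rule ccontr)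
    assume "\<not> (\<exists>i. t i \<noteq> 0)"
    then have "SC t = 0"
      using SC_le_card_support[of t] by simp
    with t(3) assms(3) \<open>0 < card A\<close> show False
      by simp
  qed
  then obtain e where "alternating_chain t e (card A)"
    using alternating_chain_of_SC[OF t(1)] alternating_chain_mono t(3) assms(3) by metis
  moreover have "\<forall>i. t i \<in> {-1, 0, 1}"
    using t(1) by (simp add: sign_seq_def)
  ultimately obtain h where h: "h \<noteq> 0" "\<forall>a\<in>A. poly h a = 0"
      "\<forall>i. coeff h i \<noteq> 0 \<longrightarrow> Sign h i = t i"
    using exists_vanishing_poly_with_signs[OF assms(1,2) refl] by metis
  have "0 < coeff f i" if "0 < coeff h i" for i
  proof -
    have "Sign h i = t i"
      using h(3) that by auto
    with that have "t i = 1"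
      by (simp add: Sign_def)
    then have "Sign f i = 1"
      using t(2)[rule_format, of i] by auto
    then show ?thesis
      by (simp add: Sign_def split: if_splits)
  qed
  with h show ?thesis
    by blast
qed

lemma exists_nonneg_perturbation:
  assumes "nonneg_poly f" and "\<forall>i. 0 < coeff h i \<longrightarrow> 0 < coeff f i"
  shows "\<exists>\<epsilon>>0. nonneg_poly (f - smult \<epsilon> h)"
proof -
  define I where "I = {i. 0 < coeff h i}"
  have "finite I"
    unfolding I_def by (rule finite_subset[OF _ finite_coeff_nonzero[of h]]) auto
  define \<epsilon> where "\<epsilon> = Min (insert 1 ((\<lambda>i. coeff f i / coeff h i) ` I))"
  have "\<epsilon> > 0"
    unfolding \<epsilon>_def using \<open>finite I\<close> assms(2) by (auto simp: I_def)
  moreover have "\<epsilon> * coeff h i \<le> coeff f i" for i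
  proof (cases "i \<in> I")
    case True
    then have "\<epsilon> \<le> coeff f i / coeff h i"
      unfolding \<epsilon>_def using \<open>finite I\<close> by (intro Min_le) auto
    with True show ?thesis
      by (simp add: I_def field_simps)
  next
    case False
    then show ?thesis
      using \<open>\<epsilon> > 0\<close> assms(1) mult_nonneg_nonpos[of \<epsilon> "coeff h i"]
      by (auto simp: I_def nonneg_poly_def intro: order_trans[of _ 0])
  qed
  ultimately show ?thesis
    by (auto simp: nonneg_poly_def)
qed

lemma interpolates_iff: "interpolates f T \<longleftrightarrow> (\<forall>p\<in>T. poly f (fst p) = snd p)"
  by (simp add: interpolates_def case_prod_beta)

lemma Sign_diff_dominated:
  assumes "nonneg_poly f" and "nonneg_poly g"
  shows "Sign (f - g) i \<in> {-1, 0, Sign f i}"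
  using assms[unfolded nonneg_poly_def, rule_format, of i]
  by (auto simp: Sign_def)

lemma admissible_data_abscissae:
  assumes "admissible_data S"
  shows "finite (fst ` S)" and "fst ` S \<subseteq> {0<..}" and "card (fst ` S) = card S"
  using assms by (auto simp: admissible_data_def card_image)

lemma admissible_data_subset:
  assumes "admissible_data S" and "T \<subseteq> S"
  shows "admissible_data T"
  using assms finite_subset[OF assms(2)] inj_on_subset[OF _ assms(2)]
  unfolding admissible_data_def by blast

lemma interpolates_diff_vanishes:
  assumes "interpolates f S" and "interpolates g S"
  shows "\<forall>a\<in>fst ` S. poly (f - g) a = 0"
  using assms by (auto simp: interpolates_iff)

lemma nonneg_interpolant_unique_if_dd_less:
  assumes S: "admissible_data S" and f: "nonneg_poly f" "interpolates f S"
    and "dd_poly f < card S" and g: "nonneg_poly g" "interpolates g S"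
  shows "g = f"
proof (rule ccontr)
  assume "g \<noteq> f"
  then have "f - g \<noteq> 0"
    by simp
  have "card S = card (fst ` S)"
    using admissible_data_abscissae[OF S] by simp
  also have "\<dots> \<le> card {x. 0 < x \<and> poly (f - g) x = 0}"
    by (rule card_le_card_pos_roots[OF \<open>f - g \<noteq> 0\<close> admissible_data_abscissae(2)[OF S]
          interpolates_diff_vanishes[OF f(2) g(2)]])
  also have "\<dots> \<le> SC (Sign (f - g))"
    by (rule descartes_rule_of_signs[OF \<open>f - g \<noteq> 0\<close>])
  also have "\<dots> \<le> dd_poly f"
    unfolding dd_poly_def
    by (intro SC_le_dd sign_seq_Sign allI Sign_diff_dominated f(1) g(1))
      (simp add: finite_coeff_nonzero)
  finally show False
    using \<open>dd_poly f < card S\<close> by simp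
qed

lemma dd_less_if_nonneg_interpolant_unique:
  assumes S: "admissible_data S" and f: "nonneg_poly f" "interpolates f S"
    and unique: "\<And>g. nonneg_poly g \<Longrightarrow> interpolates g S \<Longrightarrow> g = f"
  shows "dd_poly f < card S"
proof (rule ccontr)
  assume "\<not> dd_poly f < card S"
  then have "card (fst ` S) \<le> dd_poly f"
    using admissible_data_abscissae(3)[OF S] by simp
  then obtain h where h: "h \<noteq> 0" "\<forall>a\<in>fst ` S. poly h a = 0"
      "\<forall>i. 0 < coeff h i \<longrightarrow> 0 < coeff f i"
    using exists_vanishing_poly_dominated[OF admissible_data_abscissae(1,2)[OF S]] by blast
  then obtain \<epsilon> where "\<epsilon> > 0" and nonneg: "nonneg_poly (f - smult \<epsilon> h)"
    using exists_nonneg_perturbation[OF f(1)] by blast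
  have "interpolates (f - smult \<epsilon> h) S"
    using f(2) h(2) by (auto simp: interpolates_iff)
  then have "f - smult \<epsilon> h = f"
    by (rule unique[OF nonneg])
  with \<open>\<epsilon> > 0\<close> h(1) show False
    by simp
qed

lemma dd_less_card_iff_minimal_poly_of_proper_subset:
  assumes S: "admissible_data S" and f: "nonneg_poly f" "interpolates f S"
  shows "dd_poly f < card S \<longleftrightarrow> (\<exists>T. T \<subset> S \<and> minimal_poly_of T f)"
proof
  have "finite S"
    using S by (simp add: admissible_data_def)
  assume "dd_poly f < card S"
  then have "S \<noteq> {}"
    by auto
  then obtain x where "x \<in> S"
    by blast
  have "admissible_data (S - {x})"
    using S by (rule admissible_data_subset) blast
  moreover have "interpolates f (S - {x})"
    using f(2) by (simp add: interpolates_iff)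
  moreover have "dd_poly f \<le> card (S - {x})"
    using \<open>dd_poly f < card S\<close> \<open>x \<in> S\<close> \<open>finite S\<close> by simp
  ultimately have "minimal_poly_of (S - {x}) f"
    using f(1) by (simp add: minimal_poly_of_def)
  with \<open>x \<in> S\<close> show "\<exists>T. T \<subset> S \<and> minimal_poly_of T f"
    by blast
next
  assume "\<exists>T. T \<subset> S \<and> minimal_poly_of T f"
  then obtain T where "T \<subset> S" and "dd_poly f \<le> card T"
    by (auto simp: minimal_poly_of_def)
  moreover have "finite S"
    using S by (simp add: admissible_data_def)
  ultimately show "dd_poly f < card S"
    using psubset_card_mono[of S T] by simp
qed

theorem mainTheorem5:
  fixes S :: "(real \<times> real) set" and f :: "real poly"
  assumes "admissible_data S"
    and "nonneg_poly f"
    and "interpolates f S"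
  shows "(\<forall>g. nonneg_poly g \<and> interpolates g S \<longrightarrow> g = f)
         \<longleftrightarrow> (\<exists>T. T \<subset> S \<and> minimal_poly_of T f)"
proof -
  have "(\<forall>g. nonneg_poly g \<and> interpolates g S \<longrightarrow> g = f) \<longleftrightarrow> dd_poly f < card S"
  proof
    assume "\<forall>g. nonneg_poly g \<and> interpolates g S \<longrightarrow> g = f"
    then show "dd_poly f < card S"
      by (intro dd_less_if_nonneg_interpolant_unique[OF assms]) blast
  next
    assume "dd_poly f < card S"
    then show "\<forall>g. nonneg_poly g \<and> interpolates g S \<longrightarrow> g = f"
      using nonneg_interpolant_unique_if_dd_less[OF assms] by blast
  qed
  also have "\<dots> \<longleftrightarrow> (\<exists>T. T \<subset> S \<and> minimal_poly_of T f)"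
    by (rule dd_less_card_iff_minimal_poly_of_proper_subset[OF assms])
  finally show ?thesis .
qed

end
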